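(* Let $n \ge 2$, $k \ge 1$ and $n_i, m_i \in \mathbb{Z}\setminus\{0\}$ for $1 \le i \le k$. Put $n_{k+1} = 1 - \sum_{i=1}^k n_i$ and $m_{k+1} = 1 - \sum_{i=1}^k m_i$. (I) If $n_i' \equiv n_i \pmod n$ and $m_i' \equiv m_i \pmod n$ for all $1\le i\le k$, then $\mathcal{P}_n(n_1,\dots,n_k;m_1,\dots,m_k) \simeq_Q \mathcal{P}_n(n_1',\dots,n_k';m_1',\dots,m_k')$. (II) $\mathcal{P}_n(n_1,\dots,n_k;m_1,\dots,m_k) \simeq_Q \mathcal{P}_n(n_2,\dots,n_{k+1};m_2,\dots,m_{k+1})$. (III) $\mathcal{P}_n(n_1,\dots,n_k;m_1,\dots,m_k) \simeq_Q \mathcal{P}_n(m_1,\dots,m_k;n_2,\dots,n_{k+1})$.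
   Context: For integers $n\ge 2$, $k\ge 0$, $n_1,\dots,n_k,m_1,\dots,m_k$, with $n_{k+1} = 1 - \sum_{i=1}^k n_i$, $m_{k+1} = 1 - \sum_{i=1}^k m_i$, $\mathcal{P}_n(n_1,\dots,n_k;m_1,\dots,m_k) = \langle x, y \mid x^n y^{-2},\ x^{n_1} y x^{m_1} y^{-1} \cdots x^{n_{k+1}} y x^{m_{k+1}} y^{-1} \rangle$. Two finite presentations on the same generators are $Q$-equivalent ($\simeq_Q$) if related by a finite sequence of the moves: replace a relator $r_i$ by $r_ir_j$ ($j\neq i$); replace $r_i$ by $r_i^{-1}$; replace $r_i$ by $wr_iw^{-1}$ for some $w$ in the free group on the generators. *)

theory Defs
  imports "HOL-Number_Theory.Cong"
begin

datatype gen = GX | GY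

(* a letter is a generator together with a flag: True = inverse letter *)
type_synonym letter = "gen \<times> bool"
type_synonym word = "letter list"

definition inv_letter :: "letter \<Rightarrow> letter" where
  "inv_letter a = (fst a, \<not> snd a)"

definition inv_word :: "word \<Rightarrow> word" where
  "inv_word w = rev (map inv_letter w)"

inductive cancel_step :: "word \<Rightarrow> word \<Rightarrow> bool" where
  "cancel_step (u @ [a, inv_letter a] @ v) (u @ v)"

definition free_eq :: "word \<Rightarrow> word \<Rightarrow> bool" where
  "free_eq = (sup cancel_step cancel_step\<inverse>\<inverse>)\<^sup>*\<^sup>*"

definition gpow :: "gen \<Rightarrow> int \<Rightarrow> word" where
  "gpow g e = (if e \<ge> 0 then replicate (nat e) (g, False) else replicate (nat (- e)) (g, True))"

type_synonym presentation = "word list"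

(* elementary Q-moves; relators are elements of the free group, so replacing a
   relator by a freely equal word is also allowed *)
inductive Q_move :: "presentation \<Rightarrow> presentation \<Rightarrow> bool" where
  mult: "i < length rs \<Longrightarrow> j < length rs \<Longrightarrow> j \<noteq> i \<Longrightarrow> Q_move rs (rs[i := rs!i @ rs!j])"
| inv: "i < length rs \<Longrightarrow> Q_move rs (rs[i := inv_word (rs!i)])"
| conj: "i < length rs \<Longrightarrow> Q_move rs (rs[i := w @ rs!i @ inv_word w])"
| free: "i < length rs \<Longrightarrow> free_eq (rs!i) r \<Longrightarrow> Q_move rs (rs[i := r])"

definition Q_equiv :: "presentation \<Rightarrow> presentation \<Rightarrow> bool" (infix "\<simeq>\<^sub>Q" 50) where
  "Q_equiv = (sup Q_move Q_move\<inverse>\<inverse>)\<^sup>*\<^sup>*"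

definition ext :: "int list \<Rightarrow> int list" where
  "ext ns = ns @ [1 - sum_list ns]"

(* P_n(n_1..n_k; m_1..m_k) = < x, y | x^n y^-2, prod_{i=1}^{k+1} x^{n_i} y x^{m_i} y^-1 > *)
definition Pres :: "int \<Rightarrow> int list \<Rightarrow> int list \<Rightarrow> presentation" where
  "Pres n ns ms =
     [gpow GX n @ gpow GY (-2),
      concat (map (\<lambda>(a, b). gpow GX a @ [(GY, False)] @ gpow GX b @ [(GY, True)])
                  (zip (ext ns) (ext ms)))]"

end

theory Submission
  imports Defs
begin

(* Work modulo the Q-moves that keep the first relator R = x^n y^-2 and change only the
   second one.  These allow free reduction, conjugation and multiplication by R, hence cyclic
   rotation of the second relator and substitution of x^n for y^2 anywhere inside it; so x^n,
   every x^(n t) and y^2 commute with all words there.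
   (I) Changing exponents by multiples of n splits off central powers x^(n t); collected at
   the end they cancel, because both exponent lists extended by n_(k+1), m_(k+1) sum to 1.
   (II) is a cyclic rotation of the second relator.
   (III) Rotating by x^(n_1) y turns the second relator into the product of the blocks
   x^(m_i) y^-1 x^(n_(i+1)) y; since y^2 is central, conjugating by y^-1 agrees with
   conjugating by y. *)

section \<open>Free reduction\<close>

lemma inv_letter_inv [simp]: "inv_letter (inv_letter a) = a"
  by (simp add: inv_letter_def)

lemma inv_word_simps [simp]:
  "inv_word [] = []"
  "inv_word (a # w) = inv_word w @ [inv_letter a]"
  "inv_word (u @ v) = inv_word v @ inv_word u"
  "inv_word (inv_word w) = w"
  by (simp_all add: inv_word_def rev_map comp_def)

lemma inv_word_gpow [simp]: "inv_word (gpow g e) = gpow g (- e)"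
  by (simp add: inv_word_def gpow_def inv_letter_def)

lemma free_eq_equivclp: "free_eq = equivclp cancel_step"
  by (simp add: free_eq_def equivclp_def symclp_pointfree)

lemma free_eq_refl [simp]: "free_eq w w"
  by (simp add: free_eq_equivclp)

lemma free_eq_sym: "free_eq a b \<Longrightarrow> free_eq b a"
  by (simp add: free_eq_equivclp equivclp_sym)

lemma free_eq_trans [trans]: "free_eq a b \<Longrightarrow> free_eq b c \<Longrightarrow> free_eq a c"
  unfolding free_eq_equivclp by (rule equivclp_trans)

lemma free_eq_context: "free_eq a b \<Longrightarrow> free_eq (u @ a @ v) (u @ b @ v)"
proof -
  have step: "cancel_step (u @ a @ v) (u @ b @ v)" if "cancel_step a b" for a b
    using that by cases (metis append.assoc cancel_step.intros)
  show "free_eq a b \<Longrightarrow> free_eq (u @ a @ v) (u @ b @ v)"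
    unfolding free_eq_equivclp
    by (induction rule: equivclp_induct) (auto intro: equivclp_into_equivclp step)
qed

lemma free_eq_append: "free_eq a b \<Longrightarrow> free_eq c d \<Longrightarrow> free_eq (a @ c) (b @ d)"
  using free_eq_context[of a b "[]" c] free_eq_context[of c d b "[]"]
  by (auto intro: free_eq_trans)

lemma free_eq_cancel_pair: "free_eq (u @ [c, inv_letter c] @ v) (u @ v)"
  unfolding free_eq_equivclp by (rule r_into_equivclp) (rule cancel_step.intros)

lemma free_eq_cancel: "free_eq (w @ inv_word w) []"
proof (induction w)
  case (Cons c w)
  have "free_eq ([c] @ (w @ inv_word w) @ [inv_letter c]) ([c] @ [] @ [inv_letter c])"
    using Cons.IH by (rule free_eq_context)
  then show ?case
    using free_eq_cancel_pair[of "[]" c "[]"] by (auto intro: free_eq_trans)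
qed simp

lemma free_eq_cancel': "free_eq (inv_word w @ w) []"
  using free_eq_cancel[of "inv_word w"] by simp

lemma gpow_succ: "free_eq (gpow g e @ [(g, False)]) (gpow g (e + 1))"
proof (cases "e \<ge> 0")
  case True
  then show ?thesis by (simp add: gpow_def replicate_append_same nat_add_distrib)
next
  case False
  then have "gpow g (e + 1) = replicate (nat (- e - 1)) (g, True)"
    by (auto simp: gpow_def)
  moreover have "gpow g e = replicate (nat (- e - 1)) (g, True) @ [(g, True)]"
    using False by (simp add: gpow_def replicate_append_same flip: replicate_Suc)
  ultimately show ?thesis
    using free_eq_cancel_pair[of "gpow g (e + 1)" "(g, True)" "[]"] by (simp add: inv_letter_def)
qed

lemma gpow_pred: "free_eq (gpow g e @ [(g, True)]) (gpow g (e - 1))"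
proof -
  have "free_eq (gpow g e @ [(g, True)]) (gpow g (e - 1) @ [(g, False)] @ [(g, True)])"
    using free_eq_append[OF free_eq_sym[OF gpow_succ[of g "e - 1"]], of "[(g, True)]"] by simp
  then show ?thesis
    using free_eq_cancel_pair[of "gpow g (e - 1)" "(g, False)" "[]"]
    by (auto simp: inv_letter_def intro: free_eq_trans)
qed

lemma gpow_add: "free_eq (gpow g a @ gpow g b) (gpow g (a + b))"
proof (induction b rule: int_induct[where k = 0])
  case base
  then show ?case by (simp add: gpow_def)
next
  case (step1 b)
  have "free_eq (gpow g a @ gpow g (b + 1)) (gpow g a @ gpow g b @ [(g, False)])"
    using free_eq_context[where u = "gpow g a" and v = "[]", OF free_eq_sym[OF gpow_succ]] by simp
  also have "free_eq \<dots> (gpow g (a + b) @ [(g, False)])"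
    using free_eq_append[OF step1(2) free_eq_refl] by simp
  also have "free_eq \<dots> (gpow g (a + (b + 1)))"
    by (metis gpow_succ add.assoc)
  finally show ?case .
next
  case (step2 b)
  have "free_eq (gpow g a @ gpow g (b - 1)) (gpow g a @ gpow g b @ [(g, True)])"
    using free_eq_context[where u = "gpow g a" and v = "[]", OF free_eq_sym[OF gpow_pred]] by simp
  also have "free_eq \<dots> (gpow g (a + b) @ [(g, True)])"
    using free_eq_append[OF step2(2) free_eq_refl] by simp
  also have "free_eq \<dots> (gpow g (a + (b - 1)))"
    by (metis gpow_pred add_diff_eq)
  finally show ?case .
qed

section \<open>Q-moves on the second relator\<close>

lemma Q_equiv_equivclp: "Q_equiv = equivclp Q_move"
  by (simp add: Q_equiv_def equivclp_def symclp_pointfree)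

definition relator_equiv :: "word \<Rightarrow> word \<Rightarrow> word \<Rightarrow> bool" where
  "relator_equiv R r s \<longleftrightarrow> [R, r] \<simeq>\<^sub>Q [R, s]"

lemma relator_equiv_refl [simp]: "relator_equiv R r r"
  by (simp add: relator_equiv_def Q_equiv_equivclp)

lemma relator_equiv_sym: "relator_equiv R r s \<Longrightarrow> relator_equiv R s r"
  by (simp add: relator_equiv_def Q_equiv_equivclp equivclp_sym)

lemma relator_equiv_trans [trans]:
  "relator_equiv R r s \<Longrightarrow> relator_equiv R s t \<Longrightarrow> relator_equiv R r t"
  unfolding relator_equiv_def Q_equiv_equivclp by (rule equivclp_trans)

lemma relator_equiv_free_eq: "free_eq r s \<Longrightarrow> relator_equiv R r s"
  using Q_move.free[of 1 "[R, r]" s]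
  by (simp add: relator_equiv_def Q_equiv_equivclp r_into_equivclp)

lemma relator_equiv_conj: "relator_equiv R r (w @ r @ inv_word w)"
  using Q_move.conj[of 1 "[R, r]" w]
  by (simp add: relator_equiv_def Q_equiv_equivclp r_into_equivclp)

lemma relator_equiv_mult: "relator_equiv R r (r @ R)"
  using Q_move.mult[of 1 "[R, r]" 0]
  by (simp add: relator_equiv_def Q_equiv_equivclp r_into_equivclp)

lemma relator_equiv_conjugate:
  assumes "u @ w = w @ v"
  shows "relator_equiv R u v"
proof -
  have "relator_equiv R v (w @ v @ inv_word w)"
    by (rule relator_equiv_conj)
  also have "\<dots> = u @ w @ inv_word w @ []"
    using assms by (metis append.assoc append_Nil2)
  also have "relator_equiv R \<dots> u"
    using free_eq_context[where u = u and v = "[]", OF free_eq_cancel]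
    by (simp add: relator_equiv_free_eq)
  finally show ?thesis by (rule relator_equiv_sym)
qed

lemma relator_equiv_rotate: "relator_equiv R (u @ v) (v @ u)"
  by (rule relator_equiv_conjugate[where w = u]) simp

definition relator_cong :: "word \<Rightarrow> word \<Rightarrow> word \<Rightarrow> bool" where
  "relator_cong R a b \<longleftrightarrow> (\<forall>u v. relator_equiv R (u @ a @ v) (u @ b @ v))"

lemma relator_cong_refl [simp]: "relator_cong R a a"
  by (simp add: relator_cong_def)

lemma relator_cong_sym: "relator_cong R a b \<Longrightarrow> relator_cong R b a"
  by (simp add: relator_cong_def relator_equiv_sym)

lemma relator_cong_trans [trans]:
  "relator_cong R a b \<Longrightarrow> relator_cong R b c \<Longrightarrow> relator_cong R a c"
  unfolding relator_cong_def by (blast intro: relator_equiv_trans)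

lemma relator_cong_context: "relator_cong R a b \<Longrightarrow> relator_cong R (u @ a @ v) (u @ b @ v)"
  unfolding relator_cong_def by (metis append.assoc)

lemma relator_cong_append:
  "relator_cong R a b \<Longrightarrow> relator_cong R c d \<Longrightarrow> relator_cong R (a @ c) (b @ d)"
  using relator_cong_context[of R a b "[]" c] relator_cong_context[of R c d b "[]"]
  by (auto intro: relator_cong_trans)

lemma relator_cong_free_eq: "free_eq a b \<Longrightarrow> relator_cong R a b"
  by (simp add: relator_cong_def free_eq_context relator_equiv_free_eq)

lemma relator_equiv_if_cong: "relator_cong R a b \<Longrightarrow> relator_equiv R a b"
  unfolding relator_cong_def by (metis append_Nil append_Nil2)

lemma relator_cong_Nil_relator: "relator_cong R [] R"
  unfolding relator_cong_def
proof (intro allI)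
  fix u v
  have "relator_equiv R (u @ v) (v @ u)" by (rule relator_equiv_rotate)
  also have "relator_equiv R \<dots> ((v @ u) @ R)" by (rule relator_equiv_mult)
  also have "relator_equiv R \<dots> ((u @ R) @ v)"
    using relator_equiv_rotate[of R v "u @ R"] by simp
  finally show "relator_equiv R (u @ [] @ v) (u @ R @ v)" by simp
qed

lemma relator_cong_split:
  assumes "R = a @ b"
  shows "relator_cong R (inv_word b) a"
proof -
  have "relator_cong R ([] @ inv_word b) (R @ inv_word b)"
    by (rule relator_cong_append[OF relator_cong_Nil_relator relator_cong_refl])
  also have "relator_cong R \<dots> (a @ [] @ [])"
    using free_eq_context[OF free_eq_cancel[of b], of a "[]"] assms
    by (simp add: relator_cong_free_eq)
  finally show ?thesis by simp
qed

definition central :: "word \<Rightarrow> word \<Rightarrow> bool" where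
  "central R z \<longleftrightarrow> (\<forall>w. relator_cong R (z @ w) (w @ z))"

lemma relator_cong_commute_inv_word:
  assumes "relator_cong R (z @ w) (w @ z)"
  shows "relator_cong R (z @ inv_word w) (inv_word w @ z)"
proof -
  have "relator_cong R (z @ inv_word w) (inv_word w @ (w @ z) @ inv_word w)"
    using free_eq_context[where u = "[]" and v = "z @ inv_word w", OF free_eq_cancel'[of w]]
    by (auto intro: relator_cong_free_eq relator_cong_sym)
  also have "relator_cong R \<dots> (inv_word w @ (z @ w) @ inv_word w)"
    using relator_cong_context[OF relator_cong_sym[OF assms]] by blast
  also have "relator_cong R \<dots> ((inv_word w @ z) @ [] @ [])"
    using free_eq_context[where u = "inv_word w @ z" and v = "[]", OF free_eq_cancel[of w]]
    by (simp add: relator_cong_free_eq)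
  finally show ?thesis by simp
qed

lemma centralI:
  assumes "\<And>g. relator_cong R (z @ [(g, False)]) ([(g, False)] @ z)"
  shows "central R z"
  unfolding central_def
proof
  fix w show "relator_cong R (z @ w) (w @ z)"
  proof (induction w)
    case (Cons c w)
    obtain g b where c: "c = (g, b)" by fastforce
    have "relator_cong R (z @ [c]) ([c] @ z)"
    proof (cases b)
      case True
      then have "[c] = inv_word [(g, False)]" by (simp add: c inv_letter_def)
      then show ?thesis using relator_cong_commute_inv_word[OF assms] by simp
    next
      case False
      then show ?thesis using assms by (simp add: c)
    qed
    then have "relator_cong R (z @ [c] @ w) ([c] @ z @ w)"
      using relator_cong_append[of R "z @ [c]" "[c] @ z" w w] by simp
    also have "relator_cong R \<dots> ([c] @ w @ z)"
      using relator_cong_context[OF Cons.IH, of "[c]" "[]"] by simp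
    finally show ?case by simp
  qed simp
qed

lemma central_cong: "relator_cong R z z' \<Longrightarrow> central R z \<Longrightarrow> central R z'"
  unfolding central_def
  by (meson relator_cong_append relator_cong_refl relator_cong_sym relator_cong_trans)

lemma central_append: "central R z \<Longrightarrow> central R z' \<Longrightarrow> central R (z @ z')"
  unfolding central_def
  by (metis append.assoc relator_cong_context append_Nil append_Nil2 relator_cong_trans)

lemma central_inv_word: "central R z \<Longrightarrow> central R (inv_word z)"
  unfolding central_def by (metis relator_cong_commute_inv_word relator_cong_sym)

lemma relator_cong_central_move:
  "central R z \<Longrightarrow> relator_cong R (u @ z @ w @ v) (u @ w @ z @ v)"
  unfolding central_def using relator_cong_context[of R "z @ w" "w @ z" u v] by simp

lemma relator_cong_conj_swap:
  assumes "central R (c @ c)"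
  shows "relator_cong R (inv_word c @ w @ c) (c @ w @ inv_word c)"
proof -
  have "relator_cong R (inv_word c @ w @ c) ((inv_word c @ w @ inv_word c) @ (c @ c))"
    using free_eq_context[where u = "inv_word c @ w" and v = c, OF free_eq_cancel'[of c]]
    by (auto intro: relator_cong_free_eq free_eq_sym)
  also have "relator_cong R \<dots> ((c @ c) @ inv_word c @ w @ inv_word c)"
    using assms unfolding central_def by (blast intro: relator_cong_sym)
  also have "relator_cong R \<dots> (c @ w @ inv_word c)"
    using free_eq_context[where u = c and v = "w @ inv_word c", OF free_eq_cancel[of c]]
    by (simp add: relator_cong_free_eq)
  finally show ?thesis .
qed

section \<open>The relator x^n y^-2\<close>

definition base_relator :: "int \<Rightarrow> word" where
  "base_relator n = gpow GX n @ gpow GY (-2)"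

lemma y_square_eq_x_power:
  "relator_cong (base_relator n) [(GY, False), (GY, False)] (gpow GX n)"
proof -
  have "base_relator n = gpow GX n @ inv_word [(GY, False), (GY, False)]"
    by (simp add: base_relator_def gpow_def inv_letter_def numeral_2_eq_2)
  from relator_cong_split[OF this] show ?thesis by simp
qed

lemma central_x_power: "central (base_relator n) (gpow GX n)"
proof (rule centralI)
  fix g
  show "relator_cong (base_relator n) (gpow GX n @ [(g, False)]) ([(g, False)] @ gpow GX n)"
  proof (cases g)
    case GX
    have "[(GX, False)] = gpow GX 1" by (simp add: gpow_def)
    moreover have "free_eq (gpow GX n @ gpow GX 1) (gpow GX 1 @ gpow GX n)"
      by (metis add.commute free_eq_sym free_eq_trans gpow_add)
    ultimately show ?thesis using GX by (simp add: relator_cong_free_eq)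
  next
    case GY
    have "relator_cong (base_relator n)
            (gpow GX n @ [(GY, False)]) [(GY, False), (GY, False), (GY, False)]"
      using relator_cong_context[where u = "[]" and v = "[(GY, False)]",
          OF relator_cong_sym[OF y_square_eq_x_power]]
      by simp
    also have "relator_cong (base_relator n) \<dots> ([(GY, False)] @ gpow GX n @ [])"
      using relator_cong_context[where u = "[(GY, False)]" and v = "[]", OF y_square_eq_x_power]
      by simp
    finally show ?thesis using GY by simp
  qed
qed

lemma central_x_multiple:
  assumes "n dvd e"
  shows "central (base_relator n) (gpow GX e)"
proof -
  obtain t where e: "e = n * t" using assms by blast
  have "central (base_relator n) (gpow GX (n * t))"
  proof (induction t rule: int_induct[where k = 0])
    case base
    then show ?case by (simp add: central_def gpow_def)
  next
    case (step1 t)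
    have "central (base_relator n) (gpow GX (n * t) @ gpow GX n)"
      using step1(2) central_x_power by (rule central_append)
    moreover have "free_eq (gpow GX (n * t) @ gpow GX n) (gpow GX (n * (t + 1)))"
      using gpow_add[of GX "n * t" n] by (simp add: distrib_left)
    ultimately show ?case by (blast intro: central_cong relator_cong_free_eq)
  next
    case (step2 t)
    have "central (base_relator n) (gpow GX (n * t) @ gpow GX (- n))"
      using step2(2) central_inv_word[OF central_x_power] by (simp add: central_append)
    moreover have "free_eq (gpow GX (n * t) @ gpow GX (- n)) (gpow GX (n * (t - 1)))"
      using gpow_add[of GX "n * t" "- n"] by (simp add: right_diff_distrib)
    ultimately show ?case by (blast intro: central_cong relator_cong_free_eq)
  qed
  then show ?thesis by (simp add: e)
qed

lemma central_y_square: "central (base_relator n) [(GY, False), (GY, False)]"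
  using central_cong[OF relator_cong_sym[OF y_square_eq_x_power] central_x_power] .

section \<open>The second relator\<close>

definition prod_word :: "word \<Rightarrow> (int \<times> int) list \<Rightarrow> word" where
  "prod_word c ps = concat (map (\<lambda>(a, b). gpow GX a @ c @ gpow GX b @ inv_word c) ps)"

lemma prod_word_simps [simp]:
  "prod_word c [] = []"
  "prod_word c ((a, b) # ps) = gpow GX a @ c @ gpow GX b @ inv_word c @ prod_word c ps"
  "prod_word c (ps @ qs) = prod_word c ps @ prod_word c qs"
  by (simp_all add: prod_word_def)

lemma Pres_eq: "Pres n ns ms = [base_relator n, prod_word [(GY, False)] (zip (ext ns) (ext ms))]"
  by (simp add: Pres_def base_relator_def prod_word_def gpow_def inv_letter_def)

lemma prod_word_conj_swap:
  assumes "central R (c @ c)"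
  shows "relator_cong R (prod_word (inv_word c) ps) (prod_word c ps)"
proof (induction ps)
  case (Cons p ps)
  obtain a b where p: "p = (a, b)" by fastforce
  have "relator_cong R (gpow GX a @ (inv_word c @ gpow GX b @ c) @ prod_word (inv_word c) ps)
                       (gpow GX a @ (c @ gpow GX b @ inv_word c) @ prod_word c ps)"
    using relator_cong_append[OF relator_cong_refl
        relator_cong_append[OF relator_cong_conj_swap[OF assms] Cons.IH]] .
  then show ?case by (simp add: p)
qed simp

definition x_exponent_sum :: "(int \<times> int) list \<Rightarrow> int" where
  "x_exponent_sum ps = (\<Sum>(a, b)\<leftarrow>ps. a + b)"

lemma x_exponent_sum_zip:
  "length as = length bs \<Longrightarrow> x_exponent_sum (zip as bs) = sum_list as + sum_list bs"
  by (induction as bs rule: list_induct2) (simp_all add: x_exponent_sum_def)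

lemma prod_word_shift_exponents:
  assumes "list_all2 (rel_prod (\<lambda>a a'. [a = a'] (mod n)) (\<lambda>b b'. [b = b'] (mod n))) ps qs"
  shows "relator_cong (base_relator n) (prod_word c qs)
           (prod_word c ps @ gpow GX (x_exponent_sum qs - x_exponent_sum ps))"
  using assms
proof (induction rule: list_all2_induct)
  case Nil
  then show ?case by (simp add: x_exponent_sum_def gpow_def)
next
  case (Cons p ps q qs)
  obtain a b a' b' where p: "p = (a, b)" and q: "q = (a', b')" by fastforce
  let ?R = "base_relator n" and ?P = "prod_word c ps" and ?Q = "prod_word c qs"
  let ?A = "gpow GX (a' - a)" and ?B = "gpow GX (b' - b)"
    and ?D = "gpow GX (x_exponent_sum qs - x_exponent_sum ps)"
  from Cons.hyps(1) have "[a = a'] (mod n)" "[b = b'] (mod n)"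
    by (simp_all add: p q)
  then have "n dvd a' - a" "n dvd b' - b"
    by (simp_all add: cong_iff_dvd_diff dvd_diff_commute)
  then have A: "central ?R ?A" and B: "central ?R ?B"
    by (simp_all add: central_x_multiple)
  have "free_eq (gpow GX a') (gpow GX a @ ?A)" "free_eq (gpow GX b') (gpow GX b @ ?B)"
    using gpow_add[of GX a "a' - a"] gpow_add[of GX b "b' - b"] by (simp_all add: free_eq_sym)
  then have "relator_cong ?R (prod_word c (q # qs))
               ((gpow GX a @ ?A) @ c @ (gpow GX b @ ?B) @ inv_word c @ ?Q)"
    unfolding q prod_word_simps
    by (intro relator_cong_free_eq free_eq_append free_eq_refl)
  also have "relator_cong ?R \<dots> (gpow GX a @ ?A @ c @ gpow GX b @ ?B @ inv_word c @ ?P @ ?D)"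
    using relator_cong_context[where u = "gpow GX a @ ?A @ c @ gpow GX b @ ?B @ inv_word c"
        and v = "[]", OF Cons.IH]
    by simp
  also have "relator_cong ?R \<dots> (gpow GX a @ ?A @ c @ gpow GX b @ inv_word c @ ?P @ ?B @ ?D)"
    using relator_cong_central_move[OF B, of "gpow GX a @ ?A @ c @ gpow GX b" "inv_word c @ ?P" ?D]
    by simp
  also have "relator_cong ?R \<dots> (gpow GX a @ c @ gpow GX b @ inv_word c @ ?P @ ?A @ ?B @ ?D)"
    using relator_cong_central_move[OF A,
        of "gpow GX a" "c @ gpow GX b @ inv_word c @ ?P" "?B @ ?D"]
    by simp
  also have "relator_cong ?R \<dots>
      (prod_word c (p # ps) @ gpow GX (x_exponent_sum (q # qs) - x_exponent_sum (p # ps)))"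
  proof -
    have "free_eq (?A @ ?B @ ?D) (gpow GX (a' - a + (b' - b)) @ ?D)"
      using free_eq_append[OF gpow_add free_eq_refl] by simp
    also have "free_eq \<dots>
        (gpow GX (a' - a + (b' - b) + (x_exponent_sum qs - x_exponent_sum ps)))"
      by (rule gpow_add)
    also have "\<dots> = gpow GX (x_exponent_sum (q # qs) - x_exponent_sum (p # ps))"
      by (simp add: p q x_exponent_sum_def algebra_simps)
    finally show ?thesis
      using free_eq_context[of "?A @ ?B @ ?D" _ "gpow GX a @ c @ gpow GX b @ inv_word c @ ?P" "[]"]
      by (simp add: p relator_cong_free_eq)
  qed
  finally show ?case .
qed

section \<open>The presentations P_n\<close>

lemma sum_list_cong:
  "list_all2 (\<lambda>a b. [a = b] (mod n)) xs ys \<Longrightarrow> [sum_list xs = sum_list ys] (mod n)"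
  by (induction rule: list_all2_induct) (simp_all add: cong_add)

lemma ext_cong:
  "list_all2 (\<lambda>a b. [a = b] (mod n)) ns ns' \<Longrightarrow>
   list_all2 (\<lambda>a b. [a = b] (mod n)) (ext ns) (ext ns')"
  by (simp add: ext_def list_all2_appendI cong_diff sum_list_cong)

lemma length_ext [simp]: "length (ext ns) = Suc (length ns)"
  by (simp add: ext_def)

lemma sum_list_ext [simp]: "sum_list (ext ns) = 1"
  by (simp add: ext_def)

lemma ext_Cons_tl: "ns \<noteq> [] \<Longrightarrow> ext ns = hd ns # tl (ext ns)"
  by (cases ns) (simp_all add: ext_def)

lemma ext_tl_ext: "ns \<noteq> [] \<Longrightarrow> ext (tl (ext ns)) = tl (ext ns) @ [hd ns]"
  by (cases ns) (simp_all add: ext_def)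

lemma Pres_Q_equiv_iff:
  "Pres n ns ms \<simeq>\<^sub>Q Pres n ns' ms' \<longleftrightarrow>
     relator_equiv (base_relator n) (prod_word [(GY, False)] (zip (ext ns) (ext ms)))
       (prod_word [(GY, False)] (zip (ext ns') (ext ms')))"
  by (simp add: Pres_eq relator_equiv_def)

lemma Pres_exponents_mod:
  assumes "length ns = length ms"
    and "list_all2 (\<lambda>a b. [a = b] (mod n)) ns ns'"
    and "list_all2 (\<lambda>a b. [a = b] (mod n)) ms ms'"
  shows "Pres n ns ms \<simeq>\<^sub>Q Pres n ns' ms'"
proof -
  let ?ps = "zip (ext ns) (ext ms)" and ?qs = "zip (ext ns') (ext ms')"
  have "list_all2 (rel_prod (\<lambda>a b. [a = b] (mod n)) (\<lambda>a b. [a = b] (mod n))) ?ps ?qs"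
    using zip_transfer ext_cong[OF assms(2)] ext_cong[OF assms(3)] by (metis rel_funD)
  moreover have "x_exponent_sum ?qs = x_exponent_sum ?ps"
    using assms by (simp add: x_exponent_sum_zip list_all2_lengthD)
  ultimately have "relator_cong (base_relator n)
      (prod_word [(GY, False)] ?qs) (prod_word [(GY, False)] ?ps)"
    using prod_word_shift_exponents by (fastforce simp: gpow_def)
  then show ?thesis
    by (simp add: Pres_Q_equiv_iff relator_equiv_sym relator_equiv_if_cong)
qed

lemma Pres_rotate:
  assumes "length ns = length ms" and "ns \<noteq> []"
  shows "Pres n ns ms \<simeq>\<^sub>Q Pres n (tl (ext ns)) (tl (ext ms))"
proof -
  have "ms \<noteq> []" using assms by auto
  then have "zip (ext ns) (ext ms) = [(hd ns, hd ms)] @ zip (tl (ext ns)) (tl (ext ms))"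
    and "zip (ext (tl (ext ns))) (ext (tl (ext ms))) =
         zip (tl (ext ns)) (tl (ext ms)) @ [(hd ns, hd ms)]"
    using assms by (simp_all add: ext_tl_ext) (metis ext_Cons_tl zip_Cons_Cons)
  then show ?thesis
    by (simp only: Pres_Q_equiv_iff prod_word_simps(3) relator_equiv_rotate)
qed

lemma prod_word_conjugate_shift:
  "length bs = Suc (length as) \<Longrightarrow>
   prod_word c (zip (a # as) bs) @ gpow GX d @ c =
   gpow GX a @ c @ prod_word (inv_word c) (zip bs (as @ [d]))"
proof (induction as arbitrary: a bs)
  case Nil
  then obtain b where "bs = [b]" by (cases bs) auto
  then show ?case by simp
next
  case (Cons a' as)
  then obtain b bs' where "bs = b # bs'" and "length bs' = Suc (length as)" by (cases bs) auto
  then show ?case using Cons.IH by simp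
qed

lemma Pres_swap:
  assumes "length ns = length ms" and "ns \<noteq> []"
  shows "Pres n ns ms \<simeq>\<^sub>Q Pres n ms (tl (ext ns))"
proof -
  let ?y = "[(GY, False)]" and ?zs = "zip (ext ms) (ext (tl (ext ns)))"
  have "length (ext ms) = Suc (length (tl (ext ns)))"
    using assms(1) by simp
  from prod_word_conjugate_shift[OF this, of ?y "hd ns" "hd ns"]
  have "prod_word ?y (zip (ext ns) (ext ms)) @ (gpow GX (hd ns) @ ?y) =
        (gpow GX (hd ns) @ ?y) @ prod_word (inv_word ?y) ?zs"
    by (simp only: ext_Cons_tl[OF assms(2), symmetric] ext_tl_ext[OF assms(2), symmetric]
        append.assoc)
  then have "relator_equiv (base_relator n)
      (prod_word ?y (zip (ext ns) (ext ms))) (prod_word (inv_word ?y) ?zs)"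
    by (rule relator_equiv_conjugate)
  also have "relator_equiv (base_relator n) \<dots> (prod_word ?y ?zs)"
    using central_y_square prod_word_conj_swap[of "base_relator n" ?y ?zs]
    by (simp add: relator_equiv_if_cong)
  finally show ?thesis by (simp add: Pres_Q_equiv_iff)
qed

theorem lemma3p5:
  fixes n :: int and k :: nat and ns ms :: "int list"
  assumes "n \<ge> 2" and "k \<ge> 1"
    and "length ns = k" and "length ms = k"
    and "\<forall>i<k. ns ! i \<noteq> 0" and "\<forall>i<k. ms ! i \<noteq> 0"
  shows "(\<forall>ns' ms'. length ns' = k \<and> length ms' = k \<and>
            (\<forall>i<k. [ns' ! i = ns ! i] (mod n) \<and> [ms' ! i = ms ! i] (mod n))
            \<longrightarrow> Pres n ns ms \<simeq>\<^sub>Q Pres n ns' ms')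
       \<and> Pres n ns ms \<simeq>\<^sub>Q Pres n (tl (ext ns)) (tl (ext ms))
       \<and> Pres n ns ms \<simeq>\<^sub>Q Pres n ms (tl (ext ns))"
proof -
  have len: "length ns = length ms" and ne: "ns \<noteq> []"
    using assms(2-4) by auto
  have "Pres n ns ms \<simeq>\<^sub>Q Pres n ns' ms'"
    if "length ns' = k \<and> length ms' = k \<and>
        (\<forall>i<k. [ns' ! i = ns ! i] (mod n) \<and> [ms' ! i = ms ! i] (mod n))" for ns' ms'
    using Pres_exponents_mod[OF len] that assms(3,4)
    by (simp add: list_all2_conv_all_nth cong_sym_eq)
  then show ?thesis
    using Pres_rotate[OF len ne] Pres_swap[OF len ne] by blast
qed

end
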